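(* Let $\Gamma=\mathbb{Z}/m_1\mathbb{Z}\times\dots\times\mathbb{Z}/m_l\mathbb{Z}$, written multiplicatively with generators $x_1,\dots,x_l$ ($x_i$ of order $m_i$), so that elements of $\mathbb{C}\Gamma$ are Laurent polynomials $P(x_1,\dots,x_l)$ reduced modulo $x_i^{m_i}=1$. Let $P\in\mathbb{C}\Gamma$ be reciprocal, let $k$ be the $l_1$-norm of its coefficients, and let $|\lambda|<1/k$. For each $i$ let $\xi_{m_i}$ be a primitive $m_i$-th root of unity. Then \[ m_\Gamma(P,\lambda)=\frac{1}{|\Gamma|}\log\left(\prod_{j_1=0}^{m_1-1}\cdots\prod_{j_l=0}^{m_l-1}\Big(1-\lambda P\big(\xi_{m_1}^{j_1},\dots,\xi_{m_l}^{j_l}\big)\Big)\right), \] where $|\Gamma|=m_1\cdots m_l$ and the logarithm of the product is the sum of the principal logarithms of its factors.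
   Context: For a group $\Gamma$ and $Q=\sum_{g\in\Gamma}c_g g\in\mathbb{C}\Gamma$ (finite sum), the reciprocal is $Q^*=\sum_g\overline{c_g}\,g^{-1}$, and $Q$ is reciprocal if $Q=Q^*$. For reciprocal $P\in\mathbb{C}\Gamma$ with $l_1$-norm $k=\sum_g|c_g|$ and $|\lambda|<1/k$, define $m_\Gamma(P,\lambda)=-\sum_{n\ge1}a_n\lambda^n/n$, where $a_n$ is the coefficient of the identity element in $P^n$. *)

theory Defs
  imports "HOL-Analysis.Analysis"
begin

text \<open>Elements of the group algebra are coefficient functions c :: 'g \<Rightarrow> complex,
  vanishing outside the (finite) carrier S.\<close>

definition ga_mult :: "'g set \<Rightarrow> ('g \<Rightarrow> 'g \<Rightarrow> 'g) \<Rightarrow> ('g \<Rightarrow> 'g)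
    \<Rightarrow> ('g \<Rightarrow> complex) \<Rightarrow> ('g \<Rightarrow> complex) \<Rightarrow> 'g \<Rightarrow> complex" where
  "ga_mult S gop giv c d g = (if g \<in> S then (\<Sum>h\<in>S. c h * d (gop (giv h) g)) else 0)"

primrec ga_pow :: "'g set \<Rightarrow> ('g \<Rightarrow> 'g \<Rightarrow> 'g) \<Rightarrow> ('g \<Rightarrow> 'g) \<Rightarrow> 'g
    \<Rightarrow> ('g \<Rightarrow> complex) \<Rightarrow> nat \<Rightarrow> 'g \<Rightarrow> complex" where
  "ga_pow S gop giv e c 0 = (\<lambda>g. if g = e then 1 else 0)"
| "ga_pow S gop giv e c (Suc n) = ga_mult S gop giv c (ga_pow S gop giv e c n)"

definition ga_reciprocal :: "'g set \<Rightarrow> ('g \<Rightarrow> 'g) \<Rightarrow> ('g \<Rightarrow> complex) \<Rightarrow> bool" where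
  "ga_reciprocal S giv c \<longleftrightarrow> (\<forall>g\<in>S. c g = cnj (c (giv g)))"

definition ga_l1norm :: "'g set \<Rightarrow> ('g \<Rightarrow> complex) \<Rightarrow> real" where
  "ga_l1norm S c = (\<Sum>g\<in>S. norm (c g))"

definition mGamma :: "'g set \<Rightarrow> ('g \<Rightarrow> 'g \<Rightarrow> 'g) \<Rightarrow> ('g \<Rightarrow> 'g) \<Rightarrow> 'g
    \<Rightarrow> ('g \<Rightarrow> complex) \<Rightarrow> complex \<Rightarrow> complex" where
  "mGamma S gop giv e c lam =
     - (\<Sum>n. ga_pow S gop giv e c (Suc n) e * lam ^ Suc n / of_nat (Suc n))"

text \<open>An element x_1^{j_1}...x_l^{j_l} is encoded by the exponent function j :: nat \<Rightarrow> nat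
  with j i < m i for i < l and j i = 0 for i \<ge> l.\<close>

definition cyc_carrier :: "(nat \<Rightarrow> nat) \<Rightarrow> nat \<Rightarrow> (nat \<Rightarrow> nat) set" where
  "cyc_carrier m l = {j. (\<forall>i<l. j i < m i) \<and> (\<forall>i\<ge>l. j i = 0)}"

definition cyc_mult :: "(nat \<Rightarrow> nat) \<Rightarrow> nat \<Rightarrow> (nat \<Rightarrow> nat) \<Rightarrow> (nat \<Rightarrow> nat) \<Rightarrow> nat \<Rightarrow> nat" where
  "cyc_mult m l a b = (\<lambda>i. if i < l then (a i + b i) mod m i else 0)"

definition cyc_inv :: "(nat \<Rightarrow> nat) \<Rightarrow> nat \<Rightarrow> (nat \<Rightarrow> nat) \<Rightarrow> nat \<Rightarrow> nat" where
  "cyc_inv m l a = (\<lambda>i. if i < l then (m i - a i) mod m i else 0)"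

definition cyc_unit :: "nat \<Rightarrow> nat" where
  "cyc_unit = (\<lambda>i. 0)"

definition cyc_eval :: "(nat \<Rightarrow> nat) \<Rightarrow> nat \<Rightarrow> ((nat \<Rightarrow> nat) \<Rightarrow> complex) \<Rightarrow> (nat \<Rightarrow> complex) \<Rightarrow> complex" where
  "cyc_eval m l c z = (\<Sum>g\<in>cyc_carrier m l. c g * (\<Prod>i<l. z i ^ g i))"

definition primitive_root_of_unity :: "nat \<Rightarrow> complex \<Rightarrow> bool" where
  "primitive_root_of_unity n z \<longleftrightarrow> z ^ n = 1 \<and> (\<forall>d. 0 < d \<and> d < n \<longrightarrow> z ^ d \<noteq> 1)"

end

theory Submission
  imports Defs
begin

text \<open>For \<open>j \<in> \<Gamma>\<close>, evaluating monomials at the point \<open>(\<xi>\<^sub>1^j\<^sub>1, \<dots>, \<xi>\<^sub>l^j\<^sub>l)\<close>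
  is a character of \<open>\<Gamma>\<close>, and the Fourier transform \<open>d \<mapsto> \<Sum>\<^sub>g d\<^sub>g \<psi>(g)\<close> with respect to a
  character turns products in \<open>\<complex>\<Gamma>\<close> into products of numbers; so \<open>P^n\<close> is sent to
  \<open>P(\<xi>^j)^n\<close>. Orthogonality of these characters recovers the coefficient of the unit:
  \<open>a\<^sub>n |\<Gamma>| = \<Sum>\<^sub>j P(\<xi>^j)^n\<close>. Since \<open>|\<lambda> P(\<xi>^j)| \<le> |\<lambda>| k < 1\<close>, the series defining
  \<open>m\<^sub>\<Gamma>(P,\<lambda>)\<close> is a finite sum of series \<open>\<Sum>\<^sub>n z^n/n = -Ln (1 - z)\<close>.\<close>

definition ga_fourier :: "'g set \<Rightarrow> ('g \<Rightarrow> complex) \<Rightarrow> ('g \<Rightarrow> complex) \<Rightarrow> complex" where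
  "ga_fourier S \<psi> d = (\<Sum>g\<in>S. d g * \<psi> g)"

lemma norm_ga_fourier_le:
  assumes "\<And>g. g \<in> S \<Longrightarrow> norm (\<psi> g) \<le> 1"
  shows "norm (ga_fourier S \<psi> d) \<le> ga_l1norm S d"
proof -
  have "norm (ga_fourier S \<psi> d) \<le> (\<Sum>g\<in>S. norm (d g * \<psi> g))"
    unfolding ga_fourier_def by (rule norm_sum)
  also have "\<dots> \<le> (\<Sum>g\<in>S. norm (d g))"
    using assms by (intro sum_mono) (simp add: norm_mult mult_left_le)
  finally show ?thesis
    unfolding ga_l1norm_def .
qed

lemma ga_coeff_unit_eq_average_fourier:
  assumes "finite S" "e \<in> S"
    and orthogonal: "\<And>g. g \<in> S \<Longrightarrow> (\<Sum>j\<in>J. \<psi> j g) = (if g = e then N else 0)"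
  shows "d e * N = (\<Sum>j\<in>J. ga_fourier S (\<psi> j) d)"
proof -
  have "(\<Sum>j\<in>J. ga_fourier S (\<psi> j) d) = (\<Sum>g\<in>S. d g * (\<Sum>j\<in>J. \<psi> j g))"
    unfolding ga_fourier_def by (subst sum.swap) (simp add: sum_distrib_left)
  also have "\<dots> = (\<Sum>g\<in>S. if g = e then d g * N else 0)"
    by (intro sum.cong) (simp_all add: orthogonal)
  also have "\<dots> = d e * N"
    using assms(1,2) by simp
  finally show ?thesis ..
qed

locale concrete_finite_group =
  fixes S :: "'g set" and gop :: "'g \<Rightarrow> 'g \<Rightarrow> 'g" and giv :: "'g \<Rightarrow> 'g" and e :: 'g
  assumes finite_carrier: "finite S"
    and mult_closed: "a \<in> S \<Longrightarrow> b \<in> S \<Longrightarrow> gop a b \<in> S"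
    and inv_closed: "a \<in> S \<Longrightarrow> giv a \<in> S"
    and unit_closed: "e \<in> S"
    and mult_inv_cancel_left: "a \<in> S \<Longrightarrow> b \<in> S \<Longrightarrow> gop a (gop (giv a) b) = b"
    and inv_mult_cancel_left: "a \<in> S \<Longrightarrow> b \<in> S \<Longrightarrow> gop (giv a) (gop a b) = b"
begin

lemma ga_fourier_ga_mult:
  assumes hom: "\<And>a b. a \<in> S \<Longrightarrow> b \<in> S \<Longrightarrow> \<psi> (gop a b) = \<psi> a * \<psi> b"
  shows "ga_fourier S \<psi> (ga_mult S gop giv c d) = ga_fourier S \<psi> c * ga_fourier S \<psi> d"
proof -
  have translate: "(\<Sum>g\<in>S. d (gop (giv h) g) * \<psi> g) = \<psi> h * ga_fourier S \<psi> d" if "h \<in> S" for h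
  proof -
    have "(\<Sum>g\<in>S. d (gop (giv h) g) * \<psi> g) = (\<Sum>g\<in>S. d g * \<psi> (gop h g))"
      using that
      by (intro sum.reindex_bij_witness[where i = "gop h" and j = "gop (giv h)"])
         (simp_all add: mult_closed inv_closed mult_inv_cancel_left inv_mult_cancel_left)
    also have "\<dots> = \<psi> h * ga_fourier S \<psi> d"
      unfolding ga_fourier_def using that
      by (simp add: hom sum_distrib_left mult_ac cong: sum.cong)
    finally show ?thesis .
  qed
  have "ga_fourier S \<psi> (ga_mult S gop giv c d)
      = (\<Sum>h\<in>S. c h * (\<Sum>g\<in>S. d (gop (giv h) g) * \<psi> g))"
    unfolding ga_fourier_def ga_mult_def
    by (simp add: sum_distrib_left sum_distrib_right mult.assoc cong: sum.cong)
      (rule sum.swap)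
  also have "\<dots> = (\<Sum>h\<in>S. c h * \<psi> h * ga_fourier S \<psi> d)"
    by (intro sum.cong) (simp_all add: translate)
  also have "\<dots> = ga_fourier S \<psi> c * ga_fourier S \<psi> d"
    unfolding ga_fourier_def by (simp add: sum_distrib_right)
  finally show ?thesis .
qed

lemma ga_fourier_ga_pow:
  assumes hom: "\<And>a b. a \<in> S \<Longrightarrow> b \<in> S \<Longrightarrow> \<psi> (gop a b) = \<psi> a * \<psi> b"
    and unit: "\<psi> e = 1"
  shows "ga_fourier S \<psi> (ga_pow S gop giv e c n) = ga_fourier S \<psi> c ^ n"
proof (induction n)
  case 0
  have "ga_fourier S \<psi> (ga_pow S gop giv e c 0) = (\<Sum>g\<in>S. if g = e then \<psi> g else 0)"
    unfolding ga_fourier_def by (intro sum.cong) auto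
  then show ?case
    using finite_carrier unit_closed unit by simp
next
  case (Suc n)
  then show ?case
    by (simp add: ga_fourier_ga_mult[OF hom])
qed

end

lemma neg_Ln_one_minus_series:
  fixes z :: complex
  assumes "norm z < 1"
  shows "(\<lambda>n. z ^ Suc n / of_nat (Suc n)) sums (- Ln (1 - z))"
proof -
  have "(\<lambda>n. - (z ^ n) / of_nat n) sums Ln (1 - z)"
    using Ln_series'[of "- z"] assms by simp
  then have "(\<lambda>n. - (z ^ Suc n) / of_nat (Suc n)) sums Ln (1 - z)"
    by (subst sums_Suc_iff) simp
  then show ?thesis
    using sums_minus by fastforce
qed

lemma log_series_of_power_sums:
  fixes a :: "nat \<Rightarrow> complex" and z :: "'j \<Rightarrow> complex"
  assumes "finite J" "N \<noteq> 0"
    and power_sums: "\<And>n. a n * N = (\<Sum>j\<in>J. z j ^ n)"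
    and small: "\<And>j. j \<in> J \<Longrightarrow> norm (lam * z j) < 1"
  shows "- (\<Sum>n. a (Suc n) * lam ^ Suc n / of_nat (Suc n)) = 1 / N * (\<Sum>j\<in>J. Ln (1 - lam * z j))"
proof -
  have "(\<lambda>n. (\<Sum>j\<in>J. (lam * z j) ^ Suc n / of_nat (Suc n)) / N)
      sums ((\<Sum>j\<in>J. - Ln (1 - lam * z j)) / N)"
    by (intro sums_divide sums_sum neg_Ln_one_minus_series small)
  moreover have "(\<Sum>j\<in>J. (lam * z j) ^ Suc n / of_nat (Suc n)) / N
      = a (Suc n) * lam ^ Suc n / of_nat (Suc n)" for n
  proof -
    have "(\<Sum>j\<in>J. (lam * z j) ^ Suc n) = lam ^ Suc n * (a (Suc n) * N)"
      unfolding power_mult_distrib sum_distrib_left[symmetric] power_sums ..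
    then show ?thesis
      using \<open>N \<noteq> 0\<close> by (simp add: sum_divide_distrib[symmetric])
  qed
  ultimately show ?thesis
    by (simp add: sums_unique[symmetric] sum_negf)
qed

lemma power_mod_eq_power:
  fixes w :: "'a::monoid_mult"
  assumes "w ^ n = 1"
  shows "w ^ (k mod n) = w ^ k"
proof -
  have "w ^ k = (w ^ n) ^ (k div n) * w ^ (k mod n)"
    by (simp flip: power_mult power_add)
  then show ?thesis
    using assms by simp
qed

lemma norm_primitive_root_of_unity:
  assumes "primitive_root_of_unity n z" "0 < n"
  shows "norm z = 1"
  using assms power_eq_1_iff unfolding primitive_root_of_unity_def by (metis gr_implies_not0)

lemma sum_powers_primitive_root:
  assumes "primitive_root_of_unity n z" "k < n"
  shows "(\<Sum>t<n. (z ^ k) ^ t) = (if k = 0 then of_nat n else 0)"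
proof -
  have "(z ^ k) ^ n = 1"
    using assms(1) unfolding primitive_root_of_unity_def by (metis mult.commute power_mult power_one)
  moreover have "z ^ k \<noteq> 1" if "k \<noteq> 0"
    using assms that by (simp add: primitive_root_of_unity_def)
  ultimately show ?thesis
    by (simp add: sum_gp_strict)
qed

lemma cyc_carrier_eq_image_PiE:
  "cyc_carrier m l = (\<lambda>f i. if i < l then f i else 0) ` (\<Pi>\<^sub>E i\<in>{..<l}. {..<m i})"
proof (intro equalityI subsetI)
  fix j
  assume j: "j \<in> cyc_carrier m l"
  then have "j = (\<lambda>i. if i < l then restrict j {..<l} i else 0)"
    by (auto simp: cyc_carrier_def)
  moreover have "restrict j {..<l} \<in> (\<Pi>\<^sub>E i\<in>{..<l}. {..<m i})"
    using j by (simp add: cyc_carrier_def)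
  ultimately show "j \<in> (\<lambda>f i. if i < l then f i else 0) ` (\<Pi>\<^sub>E i\<in>{..<l}. {..<m i})"
    by (rule image_eqI)
next
  fix j
  assume "j \<in> (\<lambda>f i. if i < l then f i else 0) ` (\<Pi>\<^sub>E i\<in>{..<l}. {..<m i})"
  then obtain f where "f \<in> (\<Pi>\<^sub>E i\<in>{..<l}. {..<m i})" and "j = (\<lambda>i. if i < l then f i else 0)"
    by (elim imageE)
  then show "j \<in> cyc_carrier m l"
    by (simp add: cyc_carrier_def PiE_iff)
qed

lemma finite_cyc_carrier: "finite (cyc_carrier m l)"
  unfolding cyc_carrier_eq_image_PiE by (intro finite_imageI finite_PiE) auto

lemma sum_cyc_carrier_prod:
  fixes f :: "nat \<Rightarrow> nat \<Rightarrow> 'a::comm_semiring_1"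
  shows "(\<Sum>j\<in>cyc_carrier m l. \<Prod>i<l. f i (j i)) = (\<Prod>i<l. \<Sum>t<m i. f i t)"
proof -
  have "inj_on (\<lambda>f i. if i < l then f i else 0) (\<Pi>\<^sub>E i\<in>{..<l}. {..<m i})"
    by (intro inj_onI ext) (metis PiE_E lessThan_iff)
  then have "(\<Sum>j\<in>cyc_carrier m l. \<Prod>i<l. f i (j i)) = (\<Sum>g\<in>(\<Pi>\<^sub>E i\<in>{..<l}. {..<m i}). \<Prod>i<l. f i (g i))"
    unfolding cyc_carrier_eq_image_PiE by (simp add: sum.reindex)
  also have "\<dots> = (\<Prod>i<l. \<Sum>t<m i. f i t)"
    by (simp add: prod_sum_PiE)
  finally show ?thesis .
qed

lemma concrete_finite_group_cyc:
  assumes "\<forall>i<l. 0 < m i"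
  shows "concrete_finite_group (cyc_carrier m l) (cyc_mult m l) (cyc_inv m l) cyc_unit"
  using assms finite_cyc_carrier
  by unfold_locales (auto simp: cyc_carrier_def cyc_mult_def cyc_inv_def cyc_unit_def mod_simps fun_eq_iff)

definition cyc_monomial :: "nat \<Rightarrow> (nat \<Rightarrow> complex) \<Rightarrow> (nat \<Rightarrow> nat) \<Rightarrow> complex" where
  "cyc_monomial l z g = (\<Prod>i<l. z i ^ g i)"

lemma cyc_eval_eq_ga_fourier: "cyc_eval m l c z = ga_fourier (cyc_carrier m l) (cyc_monomial l z) c"
  by (simp add: cyc_eval_def ga_fourier_def cyc_monomial_def)

lemma cyc_monomial_unit: "cyc_monomial l z cyc_unit = 1"
  by (simp add: cyc_monomial_def cyc_unit_def)

lemma cyc_monomial_mult: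
  assumes "\<forall>i<l. z i ^ m i = 1"
  shows "cyc_monomial l z (cyc_mult m l a b) = cyc_monomial l z a * cyc_monomial l z b"
proof -
  have "z i ^ ((a i + b i) mod m i) = z i ^ a i * z i ^ b i" if "i < l" for i
    using assms that by (simp add: power_mod_eq_power power_add)
  then show ?thesis
    by (simp add: cyc_monomial_def cyc_mult_def prod.distrib[symmetric])
qed

lemma norm_cyc_monomial:
  assumes "\<forall>i<l. norm (z i) = 1"
  shows "norm (cyc_monomial l z g) = 1"
  using assms by (simp add: cyc_monomial_def prod_norm[symmetric] norm_power)

lemma cyc_characters_orthogonal:
  assumes prim: "\<forall>i<l. primitive_root_of_unity (m i) (\<xi> i)" and "g \<in> cyc_carrier m l"
  shows "(\<Sum>j\<in>cyc_carrier m l. cyc_monomial l (\<lambda>i. \<xi> i ^ j i) g)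
    = (if g = cyc_unit then of_nat (\<Prod>i<l. m i) else 0)"
proof -
  have g: "\<forall>i<l. g i < m i" "\<forall>i\<ge>l. g i = 0"
    using assms(2) by (auto simp: cyc_carrier_def)
  have "(\<Sum>j\<in>cyc_carrier m l. cyc_monomial l (\<lambda>i. \<xi> i ^ j i) g)
      = (\<Prod>i<l. \<Sum>t<m i. (\<xi> i ^ g i) ^ t)"
    unfolding cyc_monomial_def sum_cyc_carrier_prod[symmetric]
    by (simp add: mult.commute flip: power_mult)
  also have "\<dots> = (\<Prod>i<l. if g i = 0 then of_nat (m i) else 0)"
    using prim g(1) by (simp add: sum_powers_primitive_root)
  also have "\<dots> = (if \<forall>i<l. g i = 0 then of_nat (\<Prod>i<l. m i) else 0)"
    by (force simp: prod_zero_iff)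
  also have "(\<forall>i<l. g i = 0) \<longleftrightarrow> g = cyc_unit"
    using g(2) by (auto simp: cyc_unit_def fun_eq_iff) (meson leI)
  finally show ?thesis .
qed

lemma norm_cyc_eval_le:
  assumes "\<forall>i<l. norm (z i) = 1"
  shows "norm (cyc_eval m l c z) \<le> ga_l1norm (cyc_carrier m l) c"
  unfolding cyc_eval_eq_ga_fourier using assms by (intro norm_ga_fourier_le) (simp add: norm_cyc_monomial)

lemma cyc_ga_pow_unit_eq_sum_eval:
  assumes m_pos: "\<forall>i<l. 0 < m i" and prim: "\<forall>i<l. primitive_root_of_unity (m i) (\<xi> i)"
  shows "ga_pow (cyc_carrier m l) (cyc_mult m l) (cyc_inv m l) cyc_unit c n cyc_unit * of_nat (\<Prod>i<l. m i)
    = (\<Sum>j\<in>cyc_carrier m l. cyc_eval m l c (\<lambda>i. \<xi> i ^ j i) ^ n)"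
proof -
  interpret concrete_finite_group "cyc_carrier m l" "cyc_mult m l" "cyc_inv m l" cyc_unit
    using concrete_finite_group_cyc[OF m_pos] .
  have roots: "\<forall>i<l. (\<xi> i ^ j i) ^ m i = 1" for j
    using prim unfolding primitive_root_of_unity_def by (metis mult.commute power_mult power_one)
  show ?thesis
    using ga_coeff_unit_eq_average_fourier[OF finite_carrier unit_closed cyc_characters_orthogonal[OF prim]]
    by (simp add: cyc_eval_eq_ga_fourier ga_fourier_ga_pow cyc_monomial_mult[OF roots] cyc_monomial_unit)
qed

theorem corollary6p1:
  fixes l :: nat and m :: "nat \<Rightarrow> nat" and c :: "(nat \<Rightarrow> nat) \<Rightarrow> complex"
    and \<xi> :: "nat \<Rightarrow> complex" and lam :: complex
  assumes m_pos: "\<forall>i<l. 0 < m i"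
    and supp: "\<forall>g. g \<notin> cyc_carrier m l \<longrightarrow> c g = 0"
    and recip: "ga_reciprocal (cyc_carrier m l) (cyc_inv m l) c"
    and prim: "\<forall>i<l. primitive_root_of_unity (m i) (\<xi> i)"
    and lam: "norm lam * ga_l1norm (cyc_carrier m l) c < 1"
  shows "mGamma (cyc_carrier m l) (cyc_mult m l) (cyc_inv m l) cyc_unit c lam
    = (1 / of_nat (\<Prod>i<l. m i)) *
      (\<Sum>j\<in>cyc_carrier m l. Ln (1 - lam * cyc_eval m l c (\<lambda>i. \<xi> i ^ j i)))"
proof -
  have "norm (lam * cyc_eval m l c (\<lambda>i. \<xi> i ^ j i)) < 1" for j
  proof -
    have "\<forall>i<l. norm (\<xi> i ^ j i) = 1"
      using prim m_pos by (auto simp: norm_power norm_primitive_root_of_unity)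
    then have "norm (lam * cyc_eval m l c (\<lambda>i. \<xi> i ^ j i)) \<le> norm lam * ga_l1norm (cyc_carrier m l) c"
      unfolding norm_mult by (intro mult_left_mono norm_cyc_eval_le) simp_all
    then show ?thesis
      using lam by linarith
  qed
  moreover have "(of_nat (\<Prod>i<l. m i) :: complex) \<noteq> 0"
    using m_pos by simp
  ultimately show ?thesis
    unfolding mGamma_def
    by (intro log_series_of_power_sums finite_cyc_carrier cyc_ga_pow_unit_eq_sum_eval m_pos prim)
qed

end
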